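(* Fix $n,r\ge1$ and $0\le k\le n$. Then \[ \dim\mathcal{S}_r^-\Lambda^k(\mathbb{R}^n)=\dim\mathcal{P}_r^-\Lambda^k(\mathbb{R}^n)+\dim\mathcal{J}_r\Lambda^k(\mathbb{R}^n)+\dim\mathcal{J}_r\Lambda^{k-1}(\mathbb{R}^n), \] where $\dim\mathcal{P}_r^-\Lambda^k(\mathbb{R}^n)=\binom{r+n}{r+k}\binom{r+k-1}{k}$ and $\mathcal{J}_r\Lambda^{-1}:=0$.
   Context: Fix $n\ge1$. For a multi-index $\alpha\in\mathbb{N}^n$ and a subset $\sigma=\{\sigma(1)<\dots<\sigma(k)\}\subset\{1,\dots,n\}$, the form monomial is $x^\alpha dx_\sigma:=x_1^{\alpha_1}\cdots x_n^{\alpha_n}\,dx_{\sigma(1)}\wedge\cdots\wedge dx_{\sigma(k)}$, of degree $|\alpha|$. $\mathcal{H}_r\Lambda^k(\mathbb{R}^n)$ is the span of form monomials with $|\alpha|=r$, $|\sigma|=k$ (it is $0$ if $r<0$ or $k\notin\{0,\dots,n\}$), and $\mathcal{P}_r\Lambda^k:=\bigoplus_{j=0}^r\mathcal{H}_j\Lambda^k$ ($=0$ if $r<0$). $d$ is the exterior derivative. The Koszul operator $\kappa$ is defined on monomials by $\kappa(x^\alpha dx_\sigma)=\sum_{i=1}^k(-1)^{i+1}x^\alpha x_{\sigma(i)}\,dx_{\sigma(1)}\wedge\cdots\wedge\widehat{dx_{\sigma(i)}}\wedge\cdots\wedge dx_{\sigma(k)}$ and extended linearly. The trimmed polynomial space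 is $\mathcal{P}_r^-\Lambda^k:=\mathcal{P}_{r-1}\Lambda^k\oplus\kappa\,\mathcal{H}_{r-1}\Lambda^{k+1}$. The linear degree is $\mathrm{ldeg}(x^\alpha dx_\sigma):=\#\{i\notin\sigma:\alpha_i=1\}$, and $\mathcal{H}_{r,l}\Lambda^k$ is the span of form monomials in $\mathcal{H}_r\Lambda^k$ with linear degree $\ge l$. Define $\mathcal{J}_r\Lambda^k:=\sum_{l\ge1}\kappa\,\mathcal{H}_{r+l-1,l}\Lambda^{k+1}$, the serendipity space $\mathcal{S}_r\Lambda^k:=\mathcal{P}_r\Lambda^k+\mathcal{J}_r\Lambda^k+d\,\mathcal{J}_{r+1}\Lambda^{k-1}$ (forms of degree $-1$ or $n+1$ are $0$), and for $r\ge1$ the trimmed serendipity space $\mathcal{S}_r^-\Lambda^k:=\mathcal{S}_{r-1}\Lambda^k+\kappa\,\mathcal{S}_{r-1}\Lambda^{k+1}$, all on $\mathbb{R}^n$. *)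

theory Defs
  imports Complex_Main "HOL-Library.Function_Algebras"
begin

text \<open>Polynomial differential forms on R^n with real coefficients, represented by their
  coefficient functions on form monomials x^alpha dx_sigma.  A monomial index is a pair
  (alpha, sigma) with alpha :: nat => nat (exponents, alpha i = 0 outside {1..n}) and
  sigma a subset of {1..n} (the increasing index list sigma(1) < ... < sigma(k)).
  Forms are finitely supported coefficient functions; all spaces below are spans of
  such functions.\<close>

type_synonym form = "(nat \<Rightarrow> nat) \<times> nat set \<Rightarrow> real"

definition fscale :: "real \<Rightarrow> form \<Rightarrow> form" where
  "fscale c f = (\<lambda>m. c * f m)"

abbreviation fspan :: "form set \<Rightarrow> form set" where
  "fspan \<equiv> module.span fscale"

abbreviation fdim :: "form set \<Rightarrow> nat" where
  "fdim \<equiv> vector_space.dim fscale"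

definition mono :: "(nat \<Rightarrow> nat) \<Rightarrow> nat set \<Rightarrow> form" where
  "mono \<alpha> \<sigma> = (\<lambda>m. if m = (\<alpha>, \<sigma>) then 1 else 0)"

text \<open>Linear extension of an operator given on monomials (for finitely supported forms).\<close>
definition lin_ext :: "((nat \<Rightarrow> nat) \<Rightarrow> nat set \<Rightarrow> form) \<Rightarrow> form \<Rightarrow> form" where
  "lin_ext g f = (\<Sum>m\<in>{m. f m \<noteq> 0}. fscale (f m) (g (fst m) (snd m)))"

text \<open>Koszul operator on monomials: the i-th element j of sigma has
  card {l in sigma. l < j} = i - 1, so the sign (-1)^(i+1) equals (-1)^(card ...).\<close>
definition kappa_mono :: "(nat \<Rightarrow> nat) \<Rightarrow> nat set \<Rightarrow> form" where
  "kappa_mono \<alpha> \<sigma> = (\<Sum>j\<in>\<sigma>. fscale ((-1) ^ card {l\<in>\<sigma>. l < j})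
        (mono (\<alpha>(j := Suc (\<alpha> j))) (\<sigma> - {j})))"

definition kappa :: "form \<Rightarrow> form" where
  "kappa = lin_ext kappa_mono"

text \<open>Exterior derivative on monomials:
  d(x^alpha dx_sigma) = sum_i alpha_i x^(alpha - e_i) dx_i /\ dx_sigma, and
  dx_i /\ dx_sigma = (-1)^(card {l in sigma. l < i}) dx_(sigma + {i}) for i not in sigma.\<close>
definition d_mono :: "nat \<Rightarrow> (nat \<Rightarrow> nat) \<Rightarrow> nat set \<Rightarrow> form" where
  "d_mono n \<alpha> \<sigma> = (\<Sum>i\<in>{1..n} - \<sigma>. fscale (real (\<alpha> i) * (-1) ^ card {l\<in>\<sigma>. l < i})
        (mono (\<alpha>(i := \<alpha> i - 1)) (insert i \<sigma>)))"

definition dext :: "nat \<Rightarrow> form \<Rightarrow> form" where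
  "dext n = lin_ext (d_mono n)"

text \<open>Monomials in n variables of degree r and form degree k (empty if r < 0 or k not in 0..n).\<close>
definition Mon :: "nat \<Rightarrow> int \<Rightarrow> int \<Rightarrow> ((nat \<Rightarrow> nat) \<times> nat set) set" where
  "Mon n r k = {(\<alpha>, \<sigma>). (\<forall>i. \<alpha> i \<noteq> 0 \<longrightarrow> i \<in> {1..n}) \<and> \<sigma> \<subseteq> {1..n}
        \<and> int (\<Sum>i\<in>{1..n}. \<alpha> i) = r \<and> int (card \<sigma>) = k}"

definition ldeg :: "nat \<Rightarrow> (nat \<Rightarrow> nat) \<times> nat set \<Rightarrow> nat" where
  "ldeg n m = card {i\<in>{1..n}. i \<notin> snd m \<and> fst m i = 1}"

definition H :: "nat \<Rightarrow> int \<Rightarrow> int \<Rightarrow> form set" where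
  "H n r k = fspan ((\<lambda>m. mono (fst m) (snd m)) ` Mon n r k)"

definition Hl :: "nat \<Rightarrow> int \<Rightarrow> nat \<Rightarrow> int \<Rightarrow> form set" where
  "Hl n r l k = fspan ((\<lambda>m. mono (fst m) (snd m)) ` {m\<in>Mon n r k. ldeg n m \<ge> l})"

definition P :: "nat \<Rightarrow> int \<Rightarrow> int \<Rightarrow> form set" where
  "P n r k = fspan (\<Union>j\<in>{0..r}. H n j k)"

definition Pminus :: "nat \<Rightarrow> int \<Rightarrow> int \<Rightarrow> form set" where
  "Pminus n r k = fspan (P n (r - 1) k \<union> kappa ` H n (r - 1) (k + 1))"

definition J :: "nat \<Rightarrow> int \<Rightarrow> int \<Rightarrow> form set" where
  "J n r k = fspan (\<Union>l\<in>{1::nat..}. kappa ` Hl n (r + int l - 1) l (k + 1))"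

definition S :: "nat \<Rightarrow> int \<Rightarrow> int \<Rightarrow> form set" where
  "S n r k = fspan (P n r k \<union> J n r k \<union> dext n ` J n (r + 1) (k - 1))"

definition Sminus :: "nat \<Rightarrow> int \<Rightarrow> int \<Rightarrow> form set" where
  "Sminus n r k = fspan (S n (r - 1) k \<union> kappa ` S n (r - 1) (k + 1))"

end

theory Submission
  imports Defs "HOL-Library.Multiset"
begin

(* The Koszul operator kappa and the exterior derivative d satisfy the homotopy formula
   d kappa + kappa d = (r + k) id on forms of polynomial degree r and form degree k.
   Hence d is injective on the range of kappa, kappa is injective on exact forms, and
   H_r Lambda^k = kappa H_(r-1) Lambda^(k+1) (+) d H_(r+1) Lambda^(k-1).
   Sorting generators by polynomial degree, S^-_r Lambda^k is the direct sum of the spans of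
   the monomials of degree < r, of kappa H_(r-1) Lambda^(k+1), of the generators of
   J_r Lambda^k and of their images under d; the first two make up P^-_r Lambda^k, and d is
   injective on the last.  The splitting of H_r Lambda^k gives a recurrence for
   dim kappa H_(r-1) Lambda^(k+1), solved by induction on k; binomial identities then give the
   closed form of dim P^-_r Lambda^k. *)

section \<open>Dimensions in vector spaces\<close>

lemma (in module) span_Un_span_left: "span (span A \<union> B) = span (A \<union> B)"
  unfolding span_eq by (auto intro: span_base span_mono[THEN subsetD] simp: span_superset[THEN subsetD])

lemma (in module) span_Un_spans: "span (span A \<union> span B) = span (A \<union> B)"
  by (metis span_Un_span_left sup_commute)

lemma (in module) span_Un_spans3: "span (span A \<union> span B \<union> span C) = span (A \<union> B \<union> C)"
  by (metis span_Un_span_left span_Un_spans)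

lemma (in module) span_UN_span: "span (\<Union>i\<in>I. span (A i)) = span (\<Union>i\<in>I. A i)"
proof -
  have "span (A i) \<subseteq> span (\<Union>i\<in>I. A i)" if "i \<in> I" for i
    using that by (intro span_mono) blast
  moreover have "A i \<subseteq> span (\<Union>i\<in>I. span (A i))" if "i \<in> I" for i
    using that span_superset[of "A i"] span_superset[of "\<Union>i\<in>I. span (A i)"] by blast
  ultimately show ?thesis unfolding span_eq by blast
qed

lemma (in vector_space) span_scale_cancel: "c *s x \<in> span X \<Longrightarrow> c \<noteq> 0 \<Longrightarrow> x \<in> span X"
  using span_scale[of "c *s x" X "inverse c"] by simp

lemma (in module) independent_Un:
  assumes A: "independent A" and B: "independent B" and AB: "span A \<inter> span B \<subseteq> {0}"
  shows "independent (A \<union> B)"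
  unfolding independent_explicit_module
proof (intro allI impI)
  fix t u v assume t: "finite t" "t \<subseteq> A \<union> B" and sum0: "(\<Sum>v\<in>t. u v *s v) = 0" and v: "v \<in> t"
  define a where "a = (\<Sum>v\<in>t \<inter> A. u v *s v)"
  define b where "b = (\<Sum>v\<in>t - A. u v *s v)"
  have "a + b = 0"
    using sum0 sum.Int_Diff[OF t(1), of "\<lambda>v. u v *s v" A] by (simp add: a_def b_def)
  moreover have "a \<in> span A" "b \<in> span B"
    unfolding a_def b_def using t(2) by (auto intro!: span_sum span_scale intro: span_base)
  ultimately have "a = 0" "b = 0"
    using AB span_neg[of b B] by (auto simp: add_eq_0_iff2)
  then show "u v = 0"
    using independentD[OF A, of "t \<inter> A" u v] independentD[OF B, of "t - A" u v] t v
    by (auto simp: a_def b_def)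
qed

lemma (in vector_space) dim_Un_eq_add:
  assumes "finite A" "finite B" "span A \<inter> span B \<subseteq> {0}"
  shows "dim (A \<union> B) = dim A + dim B"
proof -
  obtain BA where BA: "BA \<subseteq> A" "independent BA" "A \<subseteq> span BA" "card BA = dim A"
    using basis_exists .
  obtain BB where BB: "BB \<subseteq> B" "independent BB" "B \<subseteq> span BB" "card BB = dim B"
    using basis_exists .
  have spans: "span BA \<inter> span BB \<subseteq> {0}"
    using assms(3) span_mono[OF BA(1)] span_mono[OF BB(1)] by blast
  have "BA \<inter> BB = {}"
    using spans BA(2) dependent_zero[of BA] by (auto dest: span_base)
  moreover have "card (BA \<union> BB) = dim (A \<union> B)"
    using BA BB independent_Un[OF BA(2) BB(2) spans]
    by (intro basis_card_eq_dim) (auto intro: span_mono[THEN subsetD, rotated])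
  ultimately show ?thesis
    using BA BB assms(1,2) card_Un_disjoint[of BA BB] finite_subset by metis
qed

context vector_space
begin

(* Extension by linearity is additive and homogeneous only on finitely supported forms, so the
   library's results on linear maps do not apply to it. *)
context
  fixes V :: "'b set" and f :: "'b \<Rightarrow> 'b"
  assumes V: "subspace V"
    and f_add: "\<And>x y. x \<in> V \<Longrightarrow> y \<in> V \<Longrightarrow> f (x + y) = f x + f y"
    and f_scale: "\<And>c x. x \<in> V \<Longrightarrow> f (c *s x) = c *s f x"
begin

lemma image_on_zero: "f 0 = 0"
  using f_scale[of 0 0] V by (simp add: subspace_0)

lemma subspace_image_on: "W \<subseteq> V \<Longrightarrow> subspace W \<Longrightarrow> subspace (f ` W)"
  unfolding subspace_def
proof (intro conjI ballI allI)
  assume W: "W \<subseteq> V" "0 \<in> W \<and> (\<forall>x\<in>W. \<forall>y\<in>W. x + y \<in> W) \<and> (\<forall>c. \<forall>x\<in>W. c *s x \<in> W)"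
  show "0 \<in> f ` W"
    using W image_on_zero by (metis image_eqI)
  show "x + y \<in> f ` W" if xy: "x \<in> f ` W" "y \<in> f ` W" for x y
  proof -
    obtain a b where "a \<in> W" "b \<in> W" "x = f a" "y = f b" using xy by blast
    then show ?thesis using W f_add[of a b] by (intro image_eqI[of _ f "a + b"]) (auto simp: subset_iff)
  qed
  show "c *s x \<in> f ` W" if x: "x \<in> f ` W" for c x
  proof -
    obtain a where "a \<in> W" "x = f a" using x by blast
    then show ?thesis using W f_scale[of a c] by (intro image_eqI[of _ f "c *s a"]) (auto simp: subset_iff)
  qed
qed

lemma span_image_on:
  assumes "A \<subseteq> V"
  shows "span (f ` A) = f ` span A"
proof
  have "subspace {x \<in> V. f x \<in> span (f ` A)}"
    using V f_add f_scale image_on_zero unfolding subspace_def by (auto intro: span_add span_scale span_zero)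
  then have "span A \<subseteq> {x \<in> V. f x \<in> span (f ` A)}"
    using assms by (intro span_minimal) (auto intro: span_base)
  then show "f ` span A \<subseteq> span (f ` A)" by auto
  have "span A \<subseteq> V" using assms V by (rule span_minimal)
  then show "span (f ` A) \<subseteq> f ` span A"
    by (intro span_minimal subspace_image_on) (auto intro: span_base V)
qed

lemma dim_image_eq_on:
  assumes "A \<subseteq> V" "inj_on f (span A)"
  shows "dim (f ` A) = dim A"
proof -
  obtain B where B: "B \<subseteq> A" "independent B" "A \<subseteq> span B" "card B = dim A"
    using basis_exists .
  have BV: "B \<subseteq> V" using B(1) assms(1) by blast
  have spanB: "span B = span A"
    using B span_mono span_span by (metis subset_antisym span_minimal subspace_span)
  have injB: "inj_on f B"
    using inj_on_subset[OF assms(2)] B(1) span_superset by blast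
  have "independent (f ` B)"
    unfolding dependent_def
  proof
    assume "\<exists>y\<in>f ` B. y \<in> span (f ` B - {y})"
    then obtain b where b: "b \<in> B" "f b \<in> span (f ` (B - {b}))"
      using injB by (auto simp: inj_on_image_set_diff)
    then obtain y where y: "y \<in> span (B - {b})" "f b = f y"
      using span_image_on[of "B - {b}"] BV by auto
    have "y \<in> span A" "b \<in> span A"
      using y(1) b(1) spanB span_mono[of "B - {b}" B] span_base by auto
    then have "b = y" using assms(2) y(2) by (auto dest: inj_onD)
    then show False using y(1) b(1) B(2) dependent_def by blast
  qed
  moreover have "f ` A \<subseteq> span (f ` B)"
    using B(3) span_image_on[OF BV] by auto
  ultimately have "card (f ` B) = dim (f ` A)"
    using B(1) by (intro basis_card_eq_dim) auto
  then show ?thesis using card_image[OF injB] B(4) by simp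
qed

end

end

section \<open>Finitely supported forms\<close>

interpretation fvs: vector_space fscale
  by unfold_locales (auto simp: fscale_def algebra_simps fun_eq_iff)

lemma fscale_apply: "fscale c f m = c * f m"
  by (simp add: fscale_def)

lemma sum_form_apply: "(\<Sum>x\<in>A. (f x :: form)) m = (\<Sum>x\<in>A. f x m)"
  by (induction A rule: infinite_finite_induct) auto

definition supp :: "form \<Rightarrow> ((nat \<Rightarrow> nat) \<times> nat set) set" where
  "supp f = {m. f m \<noteq> 0}"

definition monomial :: "(nat \<Rightarrow> nat) \<times> nat set \<Rightarrow> form" where
  "monomial m = mono (fst m) (snd m)"

definition fin_forms :: "form set" where
  "fin_forms = {f. finite (supp f)}"

lemma monomial_eta: "(\<lambda>m. mono (fst m) (snd m)) = monomial"
  by (simp add: fun_eq_iff monomial_def)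

lemma monomial_apply: "monomial m m' = (if m' = m then 1 else 0)"
  by (cases m) (auto simp: monomial_def mono_def)

lemma mono_eq_monomial: "mono a s = monomial (a, s)"
  by (simp add: monomial_def)

lemma supp_monomial [simp]: "supp (monomial m) = {m}"
  by (auto simp: supp_def monomial_apply)

lemma supp_zero [simp]: "supp 0 = {}"
  by (simp add: supp_def)

lemma supp_empty_iff: "supp f = {} \<longleftrightarrow> f = 0"
  by (auto simp: supp_def fun_eq_iff)

lemma supp_add: "supp (f + g) \<subseteq> supp f \<union> supp g"
  by (auto simp: supp_def)

lemma supp_sum: "supp (\<Sum>x\<in>A. fscale (c x) (h x)) \<subseteq> (\<Union>x\<in>{x\<in>A. c x \<noteq> 0}. supp (h x))"
proof
  fix m assume "m \<in> supp (\<Sum>x\<in>A. fscale (c x) (h x))"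
  then have "(\<Sum>x\<in>A. c x * h x m) \<noteq> 0" by (simp add: supp_def sum_form_apply fscale_apply)
  then obtain x where "x \<in> A" "c x * h x m \<noteq> 0" by (meson sum.not_neutral_contains_not_neutral)
  then show "m \<in> (\<Union>x\<in>{x\<in>A. c x \<noteq> 0}. supp (h x))" by (auto simp: supp_def)
qed

lemma supp_fscale: "supp (fscale c f) \<subseteq> supp f"
  by (auto simp: supp_def fscale_apply)

lemma subspace_supp_subset: "fvs.subspace {f. supp f \<subseteq> M}"
  unfolding fvs.subspace_def
proof (intro conjI ballI allI)
  fix f g assume "f \<in> {f. supp f \<subseteq> M}" "g \<in> {f. supp f \<subseteq> M}"
  then show "f + g \<in> {f. supp f \<subseteq> M}" using supp_add[of f g] by blast
next
  fix c f assume "f \<in> {f. supp f \<subseteq> M}"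
  then show "fscale c f \<in> {f. supp f \<subseteq> M}" using supp_fscale[of c f] by blast
qed simp

lemma span_supp_subset: "X \<subseteq> {f. supp f \<subseteq> M} \<Longrightarrow> fspan X \<subseteq> {f. supp f \<subseteq> M}"
  using fvs.span_minimal[OF _ subspace_supp_subset] .

lemma form_eq_sum_monomials:
  assumes "finite M" "supp f \<subseteq> M"
  shows "f = (\<Sum>m\<in>M. fscale (f m) (monomial m))"
proof
  fix x
  have "(\<Sum>m\<in>M. fscale (f m) (monomial m)) x = (\<Sum>m\<in>M. if m = x then f m else 0)"
    by (auto simp: sum_form_apply monomial_apply fscale_apply intro!: sum.cong)
  also have "\<dots> = f x" using assms by (auto simp: supp_def)
  finally show "f x = (\<Sum>m\<in>M. fscale (f m) (monomial m)) x" by simp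
qed

lemma span_monomials:
  assumes "finite M"
  shows "fspan (monomial ` M) = {f. supp f \<subseteq> M}"
proof
  show "fspan (monomial ` M) \<subseteq> {f. supp f \<subseteq> M}"
    by (rule span_supp_subset) auto
  show "{f. supp f \<subseteq> M} \<subseteq> fspan (monomial ` M)"
  proof
    fix f assume "f \<in> {f. supp f \<subseteq> M}"
    then have "f = (\<Sum>m\<in>M. fscale (f m) (monomial m))" using form_eq_sum_monomials[OF assms] by blast
    also have "\<dots> \<in> fspan (monomial ` M)"
      by (intro fvs.span_sum fvs.span_scale fvs.span_base) auto
    finally show "f \<in> fspan (monomial ` M)" .
  qed
qed

lemma dim_monomials:
  assumes "finite M"
  shows "fdim (monomial ` M) = card M"
proof -
  have inj: "inj monomial"
    by (rule injI) (metis monomial_apply zero_neq_one)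
  have "fvs.independent (monomial ` M)"
    unfolding fvs.dependent_def
  proof
    assume "\<exists>x\<in>monomial ` M. x \<in> fspan (monomial ` M - {x})"
    then obtain m where "m \<in> M" "monomial m \<in> fspan (monomial ` (M - {m}))"
      using inj by (auto simp: image_set_diff)
    then show False using span_monomials[of "M - {m}"] assms by auto
  qed
  then show ?thesis
    using fvs.dim_eq_card_independent card_image[OF inj_on_subset[OF inj]] by auto
qed

lemma subspace_fin_forms: "fvs.subspace fin_forms"
  unfolding fvs.subspace_def fin_forms_def
proof (intro conjI ballI allI)
  fix f g assume "f \<in> {f. finite (supp f)}" "g \<in> {f. finite (supp f)}"
  then show "f + g \<in> {f. finite (supp f)}" using supp_add[of f g] by (auto intro: finite_subset)
next
  fix c f assume "f \<in> {f. finite (supp f)}"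
  then show "fscale c f \<in> {f. finite (supp f)}" using supp_fscale[of c f] by (auto intro: finite_subset)
qed simp

lemma monomial_in_fin_forms [simp]: "monomial m \<in> fin_forms"
  by (simp add: fin_forms_def)

lemma monomial_image_subset_fin_forms [simp]: "monomial ` M \<subseteq> fin_forms"
  by auto

lemma lin_ext_eq_sum:
  assumes "finite M" "supp f \<subseteq> M"
  shows "lin_ext g f = (\<Sum>m\<in>M. fscale (f m) (g (fst m) (snd m)))"
  unfolding lin_ext_def using assms by (intro sum.mono_neutral_left) (auto simp: supp_def)

lemma lin_ext_add:
  assumes "f \<in> fin_forms" "h \<in> fin_forms"
  shows "lin_ext g (f + h) = lin_ext g f + lin_ext g h"
proof -
  let ?M = "supp f \<union> supp h"
  have "finite ?M" using assms by (simp add: fin_forms_def)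
  moreover have "supp (f + h) \<subseteq> ?M" by (auto simp: supp_def)
  ultimately show ?thesis
    by (simp add: lin_ext_eq_sum[of ?M] fvs.scale_left_distrib sum.distrib)
qed

lemma lin_ext_scale:
  assumes "f \<in> fin_forms"
  shows "lin_ext g (fscale c f) = fscale c (lin_ext g f)"
proof -
  have "finite (supp f)" "supp (fscale c f) \<subseteq> supp f"
    using assms supp_fscale by (auto simp: fin_forms_def)
  then show ?thesis
    by (simp add: lin_ext_eq_sum[of "supp f"] fvs.scale_sum_right fscale_apply)
qed

lemma lin_ext_diff:
  assumes "f \<in> fin_forms" "h \<in> fin_forms"
  shows "lin_ext g (f - h) = lin_ext g f - lin_ext g h"
proof -
  have diff: "f - h = f + fscale (-1) h"
    and neg: "lin_ext g f + fscale (-1) (lin_ext g h) = lin_ext g f - lin_ext g h"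
    by (simp_all add: fun_eq_iff fscale_apply)
  have "lin_ext g (f + fscale (-1) h) = lin_ext g f + fscale (-1) (lin_ext g h)"
    by (simp only: lin_ext_add[OF assms(1) fvs.subspace_scale[OF subspace_fin_forms assms(2)]]
        lin_ext_scale[OF assms(2)])
  then show ?thesis by (simp only: diff neg)
qed

lemma lin_ext_zero [simp]: "lin_ext g 0 = 0"
  by (simp add: lin_ext_def)

lemma lin_ext_monomial [simp]: "lin_ext g (monomial m) = g (fst m) (snd m)"
  using lin_ext_eq_sum[of "{m}" "monomial m" g] by (simp add: monomial_apply)

lemma lin_ext_in_fin_forms: "(\<And>a s. g a s \<in> fin_forms) \<Longrightarrow> lin_ext g f \<in> fin_forms"
  unfolding lin_ext_def
  by (intro fvs.subspace_sum[OF subspace_fin_forms] fvs.subspace_scale[OF subspace_fin_forms]) auto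

lemma lin_ext_sum:
  assumes "\<And>x. x \<in> A \<Longrightarrow> h x \<in> fin_forms"
  shows "lin_ext g (\<Sum>x\<in>A. fscale (c x) (h x)) = (\<Sum>x\<in>A. fscale (c x) (lin_ext g (h x)))"
  using assms
proof (induction A rule: infinite_finite_induct)
  case (insert x A)
  have "(\<Sum>x\<in>A. fscale (c x) (h x)) \<in> fin_forms"
    using insert by (intro fvs.subspace_sum[OF subspace_fin_forms] fvs.subspace_scale[OF subspace_fin_forms]) auto
  then have step: "lin_ext g (fscale (c x) (h x) + (\<Sum>x\<in>A. fscale (c x) (h x)))
      = fscale (c x) (lin_ext g (h x)) + lin_ext g (\<Sum>x\<in>A. fscale (c x) (h x))"
    using insert.prems fvs.subspace_scale[OF subspace_fin_forms] by (simp add: lin_ext_add lin_ext_scale)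
  have IH: "lin_ext g (\<Sum>x\<in>A. fscale (c x) (h x)) = (\<Sum>x\<in>A. fscale (c x) (lin_ext g (h x)))"
    using insert by blast
  show ?case unfolding sum.insert[OF insert(1,2)] step IH ..
qed (auto simp: lin_ext_def)

lemma lin_ext_sum_mono:
  "lin_ext g (\<Sum>x\<in>A. fscale (c x) (mono (a x) (s x))) = (\<Sum>x\<in>A. fscale (c x) (g (a x) (s x)))"
  by (simp add: lin_ext_sum mono_eq_monomial)

lemma supp_lin_ext:
  assumes "f \<in> fin_forms"
  shows "supp (lin_ext g f) \<subseteq> (\<Union>m\<in>supp f. supp (g (fst m) (snd m)))"
proof -
  have "lin_ext g f = (\<Sum>m\<in>supp f. fscale (f m) (g (fst m) (snd m)))"
    using assms by (intro lin_ext_eq_sum) (auto simp: fin_forms_def)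
  then show ?thesis
    using supp_sum[of f "\<lambda>m. g (fst m) (snd m)" "supp f"] by auto
qed

lemma lin_ext_image_span: "A \<subseteq> fin_forms \<Longrightarrow> lin_ext g ` fspan A = fspan (lin_ext g ` A)"
  by (rule fvs.span_image_on[OF subspace_fin_forms, symmetric]) (auto simp: lin_ext_add lin_ext_scale)

lemma subspace_lin_ext_image:
  "fvs.subspace V \<Longrightarrow> V \<subseteq> fin_forms \<Longrightarrow> fvs.subspace (lin_ext g ` V)"
  by (rule fvs.subspace_image_on[OF subspace_fin_forms]) (auto simp: lin_ext_add lin_ext_scale)

lemma dim_lin_ext_image:
  assumes "A \<subseteq> fin_forms" and ker: "\<And>x. x \<in> fspan A \<Longrightarrow> lin_ext g x = 0 \<Longrightarrow> x = 0"
  shows "fdim (lin_ext g ` A) = fdim A"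
proof (rule fvs.dim_image_eq_on[OF subspace_fin_forms _ _ assms(1)])
  have fin: "fspan A \<subseteq> fin_forms" using assms(1) fvs.span_minimal subspace_fin_forms by blast
  show "inj_on (lin_ext g) (fspan A)"
  proof (rule inj_onI)
    fix x y assume xy: "x \<in> fspan A" "y \<in> fspan A" "lin_ext g x = lin_ext g y"
    then have "lin_ext g (x - y) = 0" using fin by (simp add: lin_ext_diff subset_iff)
    then show "x = y" using ker[OF fvs.span_diff[OF xy(1,2)]] by simp
  qed
qed (simp_all add: lin_ext_add lin_ext_scale)

section \<open>The Koszul operator and the exterior derivative on monomials\<close>

definition pos_sign :: "nat set \<Rightarrow> nat \<Rightarrow> real" where
  "pos_sign s j = (-1) ^ card {l\<in>s. l < j}"

lemma pos_sign_sq: "pos_sign s j * pos_sign s j = 1"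
  by (simp add: pos_sign_def power_mult_distrib[symmetric])

lemma pos_sign_remove:
  assumes "finite s" "a \<in> s"
  shows "pos_sign (s - {a}) b = (if a < b then - pos_sign s b else pos_sign s b)"
proof (cases "a < b")
  case True
  then have "{l \<in> s. l < b} = insert a {l \<in> s - {a}. l < b}" using assms by auto
  then have "card {l \<in> s. l < b} = Suc (card {l \<in> s - {a}. l < b})"
    using assms by (simp add: card_insert_if)
  then show ?thesis using True by (simp add: pos_sign_def)
next
  case False
  then have "{l \<in> s. l < b} = {l \<in> s - {a}. l < b}" by auto
  then show ?thesis using False by (simp add: pos_sign_def)
qed

lemma pos_sign_insert:
  assumes "finite s" "b \<notin> s"
  shows "pos_sign (insert b s) a = (if b < a then - pos_sign s a else pos_sign s a)"
  using pos_sign_remove[of "insert b s" b a] assms by (auto split: if_splits)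

lemma pos_sign_remove_self: "pos_sign (s - {a}) a = pos_sign s a"
  unfolding pos_sign_def by (rule arg_cong[where f="\<lambda>x. (-1) ^ card x"]) auto

lemma pos_sign_insert_self: "pos_sign (insert a s) a = pos_sign s a"
  unfolding pos_sign_def by (rule arg_cong[where f="\<lambda>x. (-1) ^ card x"]) auto

lemma kappa_mono_eq:
  "kappa_mono a s = (\<Sum>j\<in>s. fscale (pos_sign s j) (mono (a(j := Suc (a j))) (s - {j})))"
  by (simp add: kappa_mono_def pos_sign_def)

lemma d_mono_eq:
  "d_mono n a s = (\<Sum>i\<in>{1..n} - s. fscale (real (a i) * pos_sign s i) (mono (a(i := a i - 1)) (insert i s)))"
  by (simp add: d_mono_def pos_sign_def)

lemma sum_mono_in_fin_forms: "(\<Sum>x\<in>A. fscale (c x) (mono (a x) (s x))) \<in> fin_forms"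
  by (intro fvs.subspace_sum[OF subspace_fin_forms] fvs.subspace_scale[OF subspace_fin_forms])
     (simp add: mono_eq_monomial)

lemma kappa_in_fin_forms: "kappa f \<in> fin_forms"
  unfolding kappa_def kappa_mono_eq by (rule lin_ext_in_fin_forms) (rule sum_mono_in_fin_forms)

lemma dext_in_fin_forms: "dext n f \<in> fin_forms"
  unfolding dext_def d_mono_eq by (rule lin_ext_in_fin_forms) (rule sum_mono_in_fin_forms)

lemma kappa_image_subset_fin_forms [simp]: "kappa ` A \<subseteq> fin_forms"
  using kappa_in_fin_forms by auto

lemma dext_image_subset_fin_forms [simp]: "dext n ` A \<subseteq> fin_forms"
  using dext_in_fin_forms by auto

lemma kappa_mono_in_fin_forms: "kappa_mono a s \<in> fin_forms"
  using kappa_in_fin_forms[of "mono a s"] by (simp add: kappa_def mono_eq_monomial)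

lemma d_mono_in_fin_forms: "d_mono n a s \<in> fin_forms"
  using dext_in_fin_forms[of n "mono a s"] by (simp add: dext_def mono_eq_monomial)

lemma sum_swap_antisym:
  assumes "finite A" "\<And>p. p \<in> A \<Longrightarrow> prod.swap p \<in> A"
    and "\<And>p. p \<in> A \<Longrightarrow> F (prod.swap p) = - F p"
  shows "sum F A = (0::form)"
proof -
  have "sum F A = sum (F \<circ> prod.swap) A"
    by (rule sum.reindex_bij_witness[of _ prod.swap prod.swap]) (use assms in auto)
  also have "\<dots> = - sum F A" using assms(3) by (simp add: sum_negf)
  finally have e: "sum F A = - sum F A" .
  show ?thesis
  proof
    fix m show "sum F A m = 0 m" using fun_cong[OF e, of m] by simp
  qed
qed

lemma kappa_kappa_mono:
  assumes fin: "finite s"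
  shows "kappa (kappa_mono a s) = 0"
proof -
  define F where "F p = fscale (pos_sign s (fst p) * pos_sign (s - {fst p}) (snd p))
     (mono (a(fst p := Suc (a (fst p)), snd p := Suc (a (snd p)))) (s - {fst p} - {snd p}))" for p
  have "kappa (kappa_mono a s) = (\<Sum>j\<in>s. fscale (pos_sign s j) (kappa_mono (a(j := Suc (a j))) (s - {j})))"
    unfolding kappa_mono_eq[of a s] kappa_def by (rule lin_ext_sum_mono)
  also have "\<dots> = (\<Sum>j\<in>s. \<Sum>i\<in>s - {j}. F (j, i))"
    by (intro sum.cong refl)
       (auto simp: kappa_mono_eq fvs.scale_sum_right F_def fvs.scale_scale intro!: sum.cong)
  also have "\<dots> = sum F (SIGMA j:s. s - {j})"
    using fin by (simp add: sum.Sigma)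
  also have "\<dots> = 0"
  proof (rule sum_swap_antisym)
    fix p assume p: "p \<in> (SIGMA j:s. s - {j})"
    then show "prod.swap p \<in> (SIGMA j:s. s - {j})" by auto
    obtain j i where ji: "p = (j, i)" "j \<in> s" "i \<in> s" "i \<noteq> j" using p by auto
    have "a(i := Suc (a i), j := Suc (a j)) = a(j := Suc (a j), i := Suc (a i))"
      using ji by (simp add: fun_upd_twist)
    moreover have "s - {i} - {j} = s - {j} - {i}" by auto
    moreover have "pos_sign s i * pos_sign (s - {i}) j = - (pos_sign s j * pos_sign (s - {j}) i)"
      using ji fin by (simp add: pos_sign_remove)
    ultimately show "F (prod.swap p) = - F p"
      unfolding F_def ji(1) by simp
  qed (use fin in auto)
  finally show ?thesis .
qed

lemma dext_d_mono:
  assumes fin: "finite s"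
  shows "dext n (d_mono n a s) = 0"
proof -
  define I where "I = {1..n}"
  define F where "F p = fscale (real (a (fst p)) * pos_sign s (fst p) * (real (a (snd p)) * pos_sign (insert (fst p) s) (snd p)))
     (mono (a(fst p := a (fst p) - 1, snd p := a (snd p) - 1)) (insert (snd p) (insert (fst p) s)))" for p
  have "dext n (d_mono n a s) = (\<Sum>i\<in>I - s. fscale (real (a i) * pos_sign s i) (d_mono n (a(i := a i - 1)) (insert i s)))"
    unfolding d_mono_eq[of n a s] dext_def I_def by (rule lin_ext_sum_mono)
  also have "\<dots> = (\<Sum>i\<in>I - s. \<Sum>i'\<in>I - insert i s. F (i, i'))"
    by (intro sum.cong refl)
       (auto simp: d_mono_eq I_def fvs.scale_sum_right F_def fvs.scale_scale intro!: sum.cong)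
  also have "\<dots> = sum F (SIGMA i:I - s. I - insert i s)"
    by (simp add: sum.Sigma I_def)
  also have "\<dots> = 0"
  proof (rule sum_swap_antisym)
    fix p assume p: "p \<in> (SIGMA i:I - s. I - insert i s)"
    then show "prod.swap p \<in> (SIGMA i:I - s. I - insert i s)" by auto
    obtain i j where ji: "p = (i, j)" "i \<notin> s" "j \<notin> s" "i \<noteq> j" using p by auto
    have "a(j := a j - Suc 0, i := a i - Suc 0) = a(i := a i - Suc 0, j := a j - Suc 0)"
      using ji by (simp add: fun_upd_twist)
    moreover have "insert i (insert j s) = insert j (insert i s)" by auto
    moreover have "real (a j) * pos_sign s j * (real (a i) * pos_sign (insert j s) i)
        = - (real (a i) * pos_sign s i * (real (a j) * pos_sign (insert i s) j))"
      using ji fin by (simp add: pos_sign_insert)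
    ultimately show "F (prod.swap p) = - F p"
      unfolding F_def ji(1) by (simp del: insert_commute)
  qed (auto simp: I_def)
  finally show ?thesis .
qed

(* The terms of d kappa and kappa d that change x_b dx_j into x_j dx_b; they cancel. *)
definition cross_term :: "(nat \<Rightarrow> nat) \<Rightarrow> nat set \<Rightarrow> nat \<Rightarrow> nat \<Rightarrow> form" where
  "cross_term a s j b = fscale (pos_sign s j * (real (a b) * pos_sign (s - {j}) b))
     (mono (a(j := Suc (a j), b := a b - 1)) (insert b (s - {j})))"

lemma d_mono_of_kappa_term:
  assumes s: "s \<subseteq> {1..n}" and j: "j \<in> s"
  shows "fscale (pos_sign s j) (d_mono n (a(j := Suc (a j))) (s - {j}))
     = fscale (real (Suc (a j))) (mono a s) + (\<Sum>b\<in>{1..n} - s. cross_term a s j b)"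
proof -
  let ?a = "a(j := Suc (a j))"
  have "{1..n} - (s - {j}) = insert j ({1..n} - s)" using j s by auto
  then have "d_mono n ?a (s - {j}) = fscale (real (Suc (a j)) * pos_sign s j) (mono a s) +
      (\<Sum>b\<in>{1..n} - s. fscale (real (a b) * pos_sign (s - {j}) b) (mono (?a(b := a b - 1)) (insert b (s - {j}))))"
    using j by (simp add: d_mono_eq pos_sign_remove_self insert_absorb) (rule sum.cong; auto)
  moreover have "pos_sign s j * (real (Suc (a j)) * pos_sign s j) = real (Suc (a j))"
    using pos_sign_sq[of s j] by (simp add: algebra_simps)
  ultimately show ?thesis
    by (simp add: fvs.scale_right_distrib fvs.scale_sum_right fvs.scale_scale cross_term_def del: of_nat_Suc)
qed

lemma dext_kappa_mono:
  assumes "s \<subseteq> {1..n}"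
  shows "dext n (kappa_mono a s) = (\<Sum>j\<in>s. fscale (real (Suc (a j))) (mono a s))
      + (\<Sum>j\<in>s. \<Sum>b\<in>{1..n} - s. cross_term a s j b)"
proof -
  have "dext n (kappa_mono a s) = (\<Sum>j\<in>s. fscale (pos_sign s j) (d_mono n (a(j := Suc (a j))) (s - {j})))"
    unfolding kappa_mono_eq[of a s] dext_def by (rule lin_ext_sum_mono)
  also have "\<dots> = (\<Sum>j\<in>s. fscale (real (Suc (a j))) (mono a s) + (\<Sum>b\<in>{1..n} - s. cross_term a s j b))"
    using assms by (intro sum.cong refl d_mono_of_kappa_term)
  finally show ?thesis by (simp only: sum.distrib)
qed

lemma kappa_mono_of_d_term:
  assumes fin: "finite s" and b: "b \<notin> s"
  shows "fscale (real (a b) * pos_sign s b) (kappa_mono (a(b := a b - 1)) (insert b s))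
     = fscale (real (a b)) (mono a s) - (\<Sum>j\<in>s. cross_term a s j b)"
proof -
  let ?a = "a(b := a b - 1)"
  have "kappa_mono ?a (insert b s) = fscale (pos_sign s b) (mono (?a(b := Suc (a b - 1))) s)
      + (\<Sum>j\<in>s. fscale (pos_sign (insert b s) j) (mono (?a(j := Suc (a j))) (insert b s - {j})))"
    using fin b by (simp add: kappa_mono_eq pos_sign_insert_self) (rule sum.cong; auto)
  moreover have "fscale (real (a b) * pos_sign s b) (fscale (pos_sign s b) (mono (?a(b := Suc (a b - 1))) s))
      = fscale (real (a b)) (mono a s)"
  proof (cases "a b = 0")
    case False
    then have "?a(b := Suc (a b - 1)) = a" by (simp add: fun_eq_iff)
    moreover have "real (a b) * pos_sign s b * pos_sign s b = real (a b)"
      using pos_sign_sq[of s b] by (simp add: algebra_simps)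
    ultimately show ?thesis by (simp add: fvs.scale_scale)
  qed simp
  moreover have "fscale (real (a b) * pos_sign s b) (fscale (pos_sign (insert b s) j) (mono (?a(j := Suc (a j))) (insert b s - {j})))
      = - cross_term a s j b" if j: "j \<in> s" for j
  proof -
    have "j \<noteq> b" using j b by auto
    then have "?a(j := Suc (a j)) = a(j := Suc (a j), b := a b - 1)" "insert b s - {j} = insert b (s - {j})"
      by (auto simp: fun_upd_twist)
    moreover have "real (a b) * pos_sign s b * pos_sign (insert b s) j = - (pos_sign s j * (real (a b) * pos_sign (s - {j}) b))"
      using j b \<open>j \<noteq> b\<close> fin by (auto simp: pos_sign_remove pos_sign_insert)
    ultimately show ?thesis by (simp add: cross_term_def fvs.scale_scale)
  qed
  ultimately show ?thesis
    by (simp add: fvs.scale_right_distrib fvs.scale_sum_right sum_negf)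
qed

lemma kappa_d_mono:
  assumes "finite s"
  shows "kappa (d_mono n a s) = (\<Sum>b\<in>{1..n} - s. fscale (real (a b)) (mono a s))
      - (\<Sum>j\<in>s. \<Sum>b\<in>{1..n} - s. cross_term a s j b)"
proof -
  have "kappa (d_mono n a s) = (\<Sum>b\<in>{1..n} - s. fscale (real (a b) * pos_sign s b) (kappa_mono (a(b := a b - 1)) (insert b s)))"
    unfolding d_mono_eq[of n a s] kappa_def by (rule lin_ext_sum_mono)
  also have "\<dots> = (\<Sum>b\<in>{1..n} - s. fscale (real (a b)) (mono a s) - (\<Sum>j\<in>s. cross_term a s j b))"
    using assms by (intro sum.cong refl kappa_mono_of_d_term) auto
  finally show ?thesis by (simp only: sum_subtractf sum.swap[of _ "{1..n} - s"])
qed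

lemma homotopy_mono:
  assumes s: "s \<subseteq> {1..n}" and a: "\<forall>i. a i \<noteq> 0 \<longrightarrow> i \<in> {1..n}"
  shows "dext n (kappa_mono a s) + kappa (d_mono n a s) = fscale (real (sum a {1..n} + card s)) (mono a s)"
proof -
  have fin: "finite s" using s finite_subset by blast
  have "sum a {1..n} = sum a ({1..n} - s) + sum a s"
    using sum.subset_diff[OF s] by simp
  then have "(\<Sum>j\<in>s. real (Suc (a j))) + (\<Sum>b\<in>{1..n} - s. real (a b)) = real (sum a {1..n} + card s)"
    by (simp add: sum.distrib)
  then show ?thesis
    using dext_kappa_mono[OF s, of a] kappa_d_mono[OF fin, of n a]
    by (simp add: fvs.scale_sum_left[symmetric] fvs.scale_left_distrib[symmetric] del: of_nat_Suc)
qed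

section \<open>Forms in n variables and the homotopy formula\<close>

definition Mons :: "nat \<Rightarrow> ((nat \<Rightarrow> nat) \<times> nat set) set" where
  "Mons n = {(a, s). (\<forall>i. a i \<noteq> 0 \<longrightarrow> i \<in> {1..n}) \<and> s \<subseteq> {1..n}}"

definition poly_deg :: "nat \<Rightarrow> (nat \<Rightarrow> nat) \<times> nat set \<Rightarrow> nat" where
  "poly_deg n m = (\<Sum>i\<in>{1..n}. fst m i)"

definition total_deg :: "nat \<Rightarrow> (nat \<Rightarrow> nat) \<times> nat set \<Rightarrow> nat" where
  "total_deg n m = poly_deg n m + card (snd m)"

definition forms :: "nat \<Rightarrow> form set" where
  "forms n = {f \<in> fin_forms. supp f \<subseteq> Mons n}"

lemma Mon_eq: "Mon n r k = {m \<in> Mons n. int (poly_deg n m) = r \<and> int (card (snd m)) = k}"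
  by (auto simp: Mon_def Mons_def poly_deg_def)

lemma Mon_subset_Mons: "Mon n r k \<subseteq> Mons n"
  by (auto simp: Mon_eq)

lemma in_Mon_degrees: "m \<in> Mons n \<Longrightarrow> m \<in> Mon n (poly_deg n m) (card (snd m))"
  by (simp add: Mon_eq)

lemma finite_snd_Mons: "m \<in> Mons n \<Longrightarrow> finite (snd m)"
  using finite_subset[of "snd m" "{1..n}"] by (auto simp: Mons_def)

lemma sum_fun_upd_nat:
  assumes "finite I" "j \<in> I"
  shows "sum (a(j := v)) I + a j = sum a I + (v::nat)"
  using sum.remove[OF assms, of "a(j := v)"] sum.remove[OF assms, of a] by simp

lemma supp_kappa_mono:
  assumes "(a, s) \<in> Mon n r k"
  shows "supp (kappa_mono a s) \<subseteq> Mon n (r + 1) (k - 1)"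
proof -
  have a: "\<forall>i. a i \<noteq> 0 \<longrightarrow> i \<in> {1..n}" "s \<subseteq> {1..n}" "int (sum a {1..n}) = r" "int (card s) = k"
    using assms by (auto simp: Mon_def)
  have "(a(j := Suc (a j)), s - {j}) \<in> Mon n (r + 1) (k - 1)" if j: "j \<in> s" for j
  proof -
    have fin: "finite s" using a(2) finite_subset by blast
    have "sum (a(j := Suc (a j))) {1..n} + a j = sum a {1..n} + Suc (a j)"
      using j a(2) by (intro sum_fun_upd_nat) auto
    then have "int (sum (a(j := Suc (a j))) {1..n}) = r + 1" using a(3) by simp
    moreover have "int (card (s - {j})) = k - 1"
      using j fin a(4) card_gt_0_iff[of s] by (auto simp: of_nat_diff)
    ultimately show ?thesis unfolding Mon_def using a j by auto
  qed
  then show ?thesis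
    using supp_sum[of "pos_sign s" "\<lambda>j. mono (a(j := Suc (a j))) (s - {j})" s]
    unfolding kappa_mono_eq by (auto simp: mono_eq_monomial)
qed

lemma supp_d_mono:
  assumes "(a, s) \<in> Mon n r k"
  shows "supp (d_mono n a s) \<subseteq> Mon n (r - 1) (k + 1)"
proof -
  have a: "\<forall>i. a i \<noteq> 0 \<longrightarrow> i \<in> {1..n}" "s \<subseteq> {1..n}" "int (sum a {1..n}) = r" "int (card s) = k"
    using assms by (auto simp: Mon_def)
  have "(a(i := a i - 1), insert i s) \<in> Mon n (r - 1) (k + 1)"
    if i: "i \<in> {1..n} - s" "real (a i) * pos_sign s i \<noteq> 0" for i
  proof -
    have fin: "finite s" using a(2) finite_subset by blast
    have "sum (a(i := a i - 1)) {1..n} + a i = sum a {1..n} + (a i - 1)"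
      using i by (intro sum_fun_upd_nat) auto
    moreover have "a i \<noteq> 0" using i(2) by auto
    ultimately have "sum (a(i := a i - 1)) {1..n} + 1 = sum a {1..n}" by arith
    then have "int (sum (a(i := a i - 1)) {1..n} + 1) = int (sum a {1..n})" by (rule arg_cong)
    then have "int (sum (a(i := a i - 1)) {1..n}) + 1 = int (sum a {1..n})" by (simp only: of_nat_add of_nat_1)
    then have "int (sum (a(i := a i - 1)) {1..n}) = r - 1" using a(3) by linarith
    moreover have "int (card (insert i s)) = k + 1" using i fin a(4) by simp
    ultimately show ?thesis unfolding Mon_def using a i by auto
  qed
  then show ?thesis
    using supp_sum[of "\<lambda>i. real (a i) * pos_sign s i" "\<lambda>i. mono (a(i := a i - 1)) (insert i s)" "{1..n} - s"]
    unfolding d_mono_eq by (auto simp: mono_eq_monomial)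
qed

lemma supp_kappa:
  assumes "f \<in> fin_forms" "supp f \<subseteq> Mon n r k"
  shows "supp (kappa f) \<subseteq> Mon n (r + 1) (k - 1)"
  using supp_lin_ext[OF assms(1), of kappa_mono] supp_kappa_mono assms(2)
  unfolding kappa_def by fastforce

lemma supp_dext:
  assumes "f \<in> fin_forms" "supp f \<subseteq> Mon n r k"
  shows "supp (dext n f) \<subseteq> Mon n (r - 1) (k + 1)"
  using supp_lin_ext[OF assms(1), of "d_mono n"] supp_d_mono assms(2)
  unfolding dext_def by fastforce

lemma supp_kappa_forms:
  assumes "f \<in> forms n"
  shows "supp (kappa f) \<subseteq> {m \<in> Mons n. poly_deg n m \<noteq> 0}"
proof -
  have "supp (kappa_mono a s) \<subseteq> {m \<in> Mons n. poly_deg n m \<noteq> 0}" if "(a, s) \<in> Mons n" for a s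
    using supp_kappa_mono[OF in_Mon_degrees[OF that]] by (auto simp: Mon_eq)
  then show ?thesis
    using supp_lin_ext[of f kappa_mono] assms unfolding kappa_def forms_def by fastforce
qed

lemma supp_dext_forms:
  assumes "f \<in> forms n"
  shows "supp (dext n f) \<subseteq> {m \<in> Mons n. card (snd m) \<noteq> 0}"
proof -
  have "supp (d_mono n a s) \<subseteq> {m \<in> Mons n. card (snd m) \<noteq> 0}" if "(a, s) \<in> Mons n" for a s
    using supp_d_mono[OF in_Mon_degrees[OF that]] by (auto simp: Mon_eq)
  then show ?thesis
    using supp_lin_ext[of f "d_mono n"] assms unfolding dext_def forms_def by fastforce
qed

lemma kappa_in_forms: "f \<in> forms n \<Longrightarrow> kappa f \<in> forms n"
  using supp_kappa_forms kappa_in_fin_forms by (fastforce simp: forms_def)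

lemma dext_in_forms: "f \<in> forms n \<Longrightarrow> dext n f \<in> forms n"
  using supp_dext_forms dext_in_fin_forms by (fastforce simp: forms_def)

lemma monomial_in_forms: "m \<in> Mons n \<Longrightarrow> monomial m \<in> forms n"
  by (simp add: forms_def)

lemma subspace_forms: "fvs.subspace (forms n)"
  unfolding forms_def using fvs.subspace_inter[OF subspace_fin_forms subspace_supp_subset]
  by (simp add: Int_def)

lemma lin_ext_forms_eq_sum:
  assumes "f \<in> forms n"
  shows "lin_ext g f = (\<Sum>m\<in>supp f. fscale (f m) (g (fst m) (snd m)))"
  using assms by (intro lin_ext_eq_sum) (auto simp: forms_def fin_forms_def)

lemma kappa_kappa:
  assumes "f \<in> forms n"
  shows "kappa (kappa f) = 0"
proof -
  have "kappa (kappa f) = (\<Sum>m\<in>supp f. fscale (f m) (kappa (kappa_mono (fst m) (snd m))))"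
    unfolding kappa_def lin_ext_forms_eq_sum[OF assms] by (rule lin_ext_sum) (rule kappa_mono_in_fin_forms)
  also have "\<dots> = 0"
    using assms finite_snd_Mons by (intro sum.neutral) (auto simp: forms_def kappa_kappa_mono)
  finally show ?thesis .
qed

lemma dext_dext:
  assumes "f \<in> forms n"
  shows "dext n (dext n f) = 0"
proof -
  have "dext n (dext n f) = (\<Sum>m\<in>supp f. fscale (f m) (dext n (d_mono n (fst m) (snd m))))"
    unfolding dext_def lin_ext_forms_eq_sum[OF assms] by (rule lin_ext_sum) (rule d_mono_in_fin_forms)
  also have "\<dots> = 0"
    using assms finite_snd_Mons by (intro sum.neutral) (auto simp: forms_def dext_d_mono)
  finally show ?thesis .
qed

lemma homotopy:
  assumes "f \<in> forms n"
  shows "dext n (kappa f) + kappa (dext n f) = (\<lambda>m. real (total_deg n m) * f m)"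
proof -
  have fin: "finite (supp f)" using assms by (simp add: forms_def fin_forms_def)
  have "dext n (kappa f) + kappa (dext n f) =
     (\<Sum>m\<in>supp f. fscale (f m) (dext n (kappa_mono (fst m) (snd m)) + kappa (d_mono n (fst m) (snd m))))"
    unfolding lin_ext_forms_eq_sum[OF assms, of kappa_mono, folded kappa_def]
      lin_ext_forms_eq_sum[OF assms, of "d_mono n", folded dext_def]
    by (simp add: dext_def kappa_def lin_ext_sum kappa_mono_in_fin_forms d_mono_in_fin_forms
        sum.distrib fvs.scale_right_distrib)
  also have "\<dots> = (\<Sum>m\<in>supp f. fscale (f m) (fscale (real (total_deg n m)) (monomial m)))"
    using assms homotopy_mono
    by (intro sum.cong refl) (auto simp: forms_def Mons_def total_deg_def poly_deg_def monomial_def)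
  also have "\<dots> = (\<lambda>m. real (total_deg n m) * f m)"
    using fin by (auto simp: fun_eq_iff sum_form_apply fscale_apply monomial_apply supp_def
        if_distrib[of "\<lambda>x. _ * x"] cong: if_cong)
  finally show ?thesis .
qed

lemma homotopy_homogeneous:
  assumes "f \<in> fin_forms" "supp f \<subseteq> Mon n r k"
  shows "dext n (kappa f) + kappa (dext n f) = fscale (of_int (r + k)) f"
proof -
  have "f \<in> forms n" using assms Mon_subset_Mons[of n r k] by (auto simp: forms_def)
  then have "dext n (kappa f) + kappa (dext n f) = (\<lambda>m. real (total_deg n m) * f m)"
    by (rule homotopy)
  also have "\<dots> = (\<lambda>m. of_int (r + k) * f m)"
  proof
    fix m show "real (total_deg n m) * f m = of_int (r + k) * f m"
      using assms(2) by (cases "m \<in> supp f") (auto simp: supp_def Mon_eq total_deg_def)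
  qed
  finally show ?thesis by (simp only: fscale_def)
qed

lemma eq_zero_if_kappa_dext_eq_zero:
  assumes "f \<in> forms n" "kappa f = 0" "dext n f = 0" "\<And>m. m \<in> supp f \<Longrightarrow> total_deg n m \<noteq> 0"
  shows "f = 0"
proof -
  have h: "(\<lambda>m. real (total_deg n m) * f m) = 0"
    using homotopy[OF assms(1)] assms(2,3) by (simp add: kappa_def dext_def)
  show ?thesis
  proof
    fix m
    have "m \<in> supp f \<Longrightarrow> f m = 0" using fun_cong[OF h, of m] assms(4)[of m] by simp
    then show "f m = 0 m" by (auto simp: supp_def)
  qed
qed

definition kappa_range :: "nat \<Rightarrow> form set" where
  "kappa_range n = kappa ` forms n"

definition exact_forms :: "nat \<Rightarrow> form set" where
  "exact_forms n = dext n ` forms n"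

lemma subspace_kappa_range: "fvs.subspace (kappa_range n)"
  unfolding kappa_range_def kappa_def
  by (rule subspace_lin_ext_image[OF subspace_forms]) (auto simp: forms_def)

lemma subspace_exact_forms: "fvs.subspace (exact_forms n)"
  unfolding exact_forms_def dext_def
  by (rule subspace_lin_ext_image[OF subspace_forms]) (auto simp: forms_def)

lemma kappa_monomial_in_kappa_range: "m \<in> Mons n \<Longrightarrow> kappa (monomial m) \<in> kappa_range n"
  by (auto simp: kappa_range_def intro: monomial_in_forms)

lemma dext_monomial_in_exact_forms: "m \<in> Mons n \<Longrightarrow> dext n (monomial m) \<in> exact_forms n"
  by (auto simp: exact_forms_def intro: monomial_in_forms)

(* By the homotopy formula, d is injective on the range of kappa and kappa is injective on exact
   forms, because these forms have positive polynomial, respectively form, degree. *)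

lemma kappa_range_dext_eq_zero:
  assumes "f \<in> kappa_range n" "dext n f = 0"
  shows "f = 0"
proof -
  obtain g where g: "g \<in> forms n" "f = kappa g" using assms(1) by (auto simp: kappa_range_def)
  have "total_deg n m \<noteq> 0" if "m \<in> supp f" for m
    using that supp_kappa_forms[OF g(1)] by (auto simp: g(2) total_deg_def)
  then show ?thesis
    using eq_zero_if_kappa_dext_eq_zero[OF kappa_in_forms[OF g(1)] kappa_kappa[OF g(1)]] assms(2)
    by (simp add: g(2))
qed

lemma exact_forms_kappa_eq_zero:
  assumes "f \<in> exact_forms n" "kappa f = 0"
  shows "f = 0"
proof -
  obtain g where g: "g \<in> forms n" "f = dext n g" using assms(1) by (auto simp: exact_forms_def)
  have "total_deg n m \<noteq> 0" if "m \<in> supp f" for m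
    using that supp_dext_forms[OF g(1)] by (auto simp: g(2) total_deg_def)
  then show ?thesis
    using eq_zero_if_kappa_dext_eq_zero[OF dext_in_forms[OF g(1)] _ dext_dext[OF g(1)]] assms(2)
    by (simp add: g(2))
qed

lemma dim_dext_image:
  assumes "A \<subseteq> kappa_range n"
  shows "fdim (dext n ` A) = fdim A"
  unfolding dext_def
proof (rule dim_lin_ext_image)
  show "A \<subseteq> fin_forms" using assms kappa_in_fin_forms by (auto simp: kappa_range_def)
  show "x = 0" if "x \<in> fspan A" "lin_ext (d_mono n) x = 0" for x
    using that kappa_range_dext_eq_zero fvs.span_minimal[OF assms subspace_kappa_range]
    by (auto simp: dext_def)
qed

lemma dim_kappa_image:
  assumes "A \<subseteq> exact_forms n"
  shows "fdim (kappa ` A) = fdim A"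
  unfolding kappa_def
proof (rule dim_lin_ext_image)
  show "A \<subseteq> fin_forms" using assms dext_in_fin_forms by (auto simp: exact_forms_def)
  show "x = 0" if "x \<in> fspan A" "lin_ext kappa_mono x = 0" for x
    using that exact_forms_kappa_eq_zero fvs.span_minimal[OF assms subspace_exact_forms]
    by (auto simp: kappa_def)
qed

lemma dim_Un_kappa_range_exact:
  assumes "finite A" "finite B" "A \<subseteq> kappa_range n" "B \<subseteq> exact_forms n"
  shows "fdim (A \<union> B) = fdim A + fdim B"
proof (rule fvs.dim_Un_eq_add[OF assms(1,2)])
  have "dext n f = 0" if "f \<in> exact_forms n" for f
    using that dext_dext by (auto simp: exact_forms_def)
  then show "fspan A \<inter> fspan B \<subseteq> {0}"
    using kappa_range_dext_eq_zero fvs.span_minimal[OF assms(3) subspace_kappa_range]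
      fvs.span_minimal[OF assms(4) subspace_exact_forms] by blast
qed

lemma dim_Un_disjoint_supp:
  assumes "finite A" "finite B" "A \<subseteq> {f. supp f \<subseteq> M}" "B \<subseteq> {f. supp f \<subseteq> M'}" "M \<inter> M' = {}"
  shows "fdim (A \<union> B) = fdim A + fdim B"
proof (rule fvs.dim_Un_eq_add[OF assms(1,2)])
  show "fspan A \<inter> fspan B \<subseteq> {0}"
  proof
    fix x assume "x \<in> fspan A \<inter> fspan B"
    then have "supp x = {}"
      using span_supp_subset[OF assms(3)] span_supp_subset[OF assms(4)] assms(5) by blast
    then show "x \<in> {0}" by (simp add: supp_empty_iff)
  qed
qed

section \<open>Counting monomials\<close>

lemma size_eq_sum_count:
  assumes "finite A" "set_mset M \<subseteq> A"
  shows "size M = sum (count M) A"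
  unfolding size_multiset_overloaded_eq
  using assms by (intro sum.mono_neutral_left) (auto simp: count_eq_zero_iff)

lemma count_image_multisets_of_size:
  assumes "finite A"
  shows "count ` multisets_of_size A s = {a. (\<forall>i. a i \<noteq> 0 \<longrightarrow> i \<in> A) \<and> sum a A = s}"
proof (intro equalityI subsetI)
  fix a assume "a \<in> count ` multisets_of_size A s"
  then obtain M where "set_mset M \<subseteq> A" "size M = s" "a = count M"
    by (auto simp: multisets_of_size_def)
  then show "a \<in> {a. (\<forall>i. a i \<noteq> 0 \<longrightarrow> i \<in> A) \<and> sum a A = s}"
    using size_eq_sum_count[OF assms] by (auto simp: count_eq_zero_iff)
next
  fix a assume a: "a \<in> {a. (\<forall>i. a i \<noteq> 0 \<longrightarrow> i \<in> A) \<and> sum a A = s}"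
  then have "finite {i. a i > 0}" using assms by (auto intro: finite_subset)
  then have count: "count (Abs_multiset a) = a" by simp
  have "set_mset (Abs_multiset a) \<subseteq> A"
  proof
    fix i assume "i \<in># Abs_multiset a"
    then have "a i \<noteq> 0" using count by (metis count_eq_zero_iff)
    then show "i \<in> A" using a by blast
  qed
  then have "Abs_multiset a \<in> multisets_of_size A s"
    using a size_eq_sum_count[OF assms] count by (simp add: multisets_of_size_def)
  then show "a \<in> count ` multisets_of_size A s" using count by (metis image_eqI)
qed

definition exponents :: "nat \<Rightarrow> nat \<Rightarrow> (nat \<Rightarrow> nat) set" where
  "exponents n s = {a. (\<forall>i. a i \<noteq> 0 \<longrightarrow> i \<in> {1..n}) \<and> sum a {1..n} = s}"

lemma card_exponents: "card (exponents n s) = (n + s - 1) choose s"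
proof -
  have "card (exponents n s) = card (multisets_of_size {1..n} s)"
    unfolding exponents_def count_image_multisets_of_size[symmetric, OF finite_atLeastAtMost]
    by (rule card_image) (simp add: inj_on_def multiset_eq_iff)
  also have "\<dots> = (n + s - 1) choose s" by (simp add: card_multisets_of_size)
  finally show ?thesis .
qed

lemma finite_exponents: "finite (exponents n s)"
  unfolding exponents_def count_image_multisets_of_size[symmetric, OF finite_atLeastAtMost]
  by (simp add: finite_multisets_of_size)

lemma Mon_nat_eq: "Mon n (int s) (int j) = exponents n s \<times> {t. t \<subseteq> {1..n} \<and> card t = j}"
  by (auto simp: Mon_def exponents_def simp flip: of_nat_sum)

lemma card_Mon: "card (Mon n (int s) (int j)) = ((n + s - 1) choose s) * (n choose j)"
  using n_subsets[of "{1..n}" j] by (simp add: Mon_nat_eq card_cartesian_product card_exponents)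

lemma finite_Mon: "finite (Mon n r k)"
proof (cases "r \<ge> 0 \<and> k \<ge> 0")
  case True
  then show ?thesis
    using Mon_nat_eq[of n "nat r" "nat k"] finite_exponents by simp
next
  case False
  then have "Mon n r k = {}" by (auto simp: Mon_def sum_nonneg)
  then show ?thesis by simp
qed

section \<open>Finite generating sets of the spaces\<close>

definition P_gens :: "nat \<Rightarrow> int \<Rightarrow> int \<Rightarrow> form set" where
  "P_gens n r k = monomial ` (\<Union>j\<in>{0..r}. Mon n j k)"

definition J_index :: "nat \<Rightarrow> int \<Rightarrow> int \<Rightarrow> ((nat \<Rightarrow> nat) \<times> nat set) set" where
  "J_index n r k = (\<Union>l\<in>{1::nat..}. {m \<in> Mon n (r + int l - 1) (k + 1). l \<le> ldeg n m})"

definition J_gens :: "nat \<Rightarrow> int \<Rightarrow> int \<Rightarrow> form set" where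
  "J_gens n r k = kappa ` monomial ` J_index n r k"

lemma H_eq: "H n r k = fspan (monomial ` Mon n r k)"
  unfolding H_def monomial_eta ..

lemma span_P_gens: "fspan (P_gens n r k) = {f. supp f \<subseteq> (\<Union>j\<in>{0..r}. Mon n j k)}"
  unfolding P_gens_def by (rule span_monomials) (simp add: finite_Mon)

lemma P_eq: "P n r k = fspan (P_gens n r k)"
  unfolding P_def H_eq fvs.span_UN_span P_gens_def by (simp add: image_UN)

lemma ldeg_le: "ldeg n m \<le> n"
proof -
  have "ldeg n m \<le> card {1..n}" unfolding ldeg_def by (rule card_mono) auto
  then show ?thesis by simp
qed

lemma finite_J_index: "finite (J_index n r k)"
proof -
  have "J_index n r k \<subseteq> (\<Union>l\<in>{1..n}. Mon n (r + int l - 1) (k + 1))"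
  proof
    fix m assume "m \<in> J_index n r k"
    then obtain l where l: "1 \<le> l" "m \<in> Mon n (r + int l - 1) (k + 1)" "l \<le> ldeg n m"
      unfolding J_index_def by auto
    then show "m \<in> (\<Union>l\<in>{1..n}. Mon n (r + int l - 1) (k + 1))"
      using ldeg_le[of n m] by auto
  qed
  then show ?thesis by (rule finite_subset) (simp add: finite_Mon)
qed

lemma J_eq: "J n r k = fspan (J_gens n r k)"
  unfolding J_def Hl_def monomial_eta kappa_def lin_ext_image_span[OF monomial_image_subset_fin_forms]
    fvs.span_UN_span J_gens_def J_index_def image_UN kappa_def ..

lemma Pminus_eq: "Pminus n r k = fspan (P_gens n (r - 1) k \<union> kappa ` monomial ` Mon n (r - 1) (k + 1))"
  unfolding Pminus_def P_eq H_eq kappa_def lin_ext_image_span[OF monomial_image_subset_fin_forms]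
    fvs.span_Un_spans ..

lemma J_gens_subset_fin_forms: "J_gens n r k \<subseteq> fin_forms"
  by (simp add: J_gens_def)

lemma S_eq: "S n r k = fspan (P_gens n r k \<union> J_gens n r k \<union> dext n ` J_gens n (r + 1) (k - 1))"
  unfolding S_def P_eq J_eq dext_def lin_ext_image_span[OF J_gens_subset_fin_forms]
  by (rule fvs.span_Un_spans3)

lemma Sminus_eq: "Sminus n r k = fspan (P_gens n (r - 1) k \<union> J_gens n (r - 1) k \<union> dext n ` J_gens n r (k - 1)
   \<union> kappa ` P_gens n (r - 1) (k + 1) \<union> kappa ` J_gens n (r - 1) (k + 1) \<union> kappa ` dext n ` J_gens n r k)"
proof -
  have fin: "P_gens n (r - 1) (k + 1) \<union> J_gens n (r - 1) (k + 1) \<union> dext n ` J_gens n r k \<subseteq> fin_forms"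
    by (auto simp: P_gens_def J_gens_def)
  have S1: "S n (r - 1) k = fspan (P_gens n (r - 1) k \<union> J_gens n (r - 1) k \<union> dext n ` J_gens n r (k - 1))"
    and S2: "S n (r - 1) (k + 1) = fspan (P_gens n (r - 1) (k + 1) \<union> J_gens n (r - 1) (k + 1) \<union> dext n ` J_gens n r k)"
    by (simp_all add: S_eq)
  show ?thesis
    unfolding Sminus_def S1 S2 kappa_def lin_ext_image_span[OF fin] fvs.span_Un_spans
    by (simp add: image_Un Un_assoc)
qed

lemma J_indexE:
  assumes "m \<in> J_index n r k"
  obtains l :: nat where "1 \<le> l" "m \<in> Mon n (r + int l - 1) (k + 1)" "l \<le> ldeg n m"
  using assms unfolding J_index_def by auto

lemma supp_kappa_monomial: "m \<in> Mon n r k \<Longrightarrow> supp (kappa (monomial m)) \<subseteq> Mon n (r + 1) (k - 1)"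
  using supp_kappa[of "monomial m" n r k] by simp

lemma supp_dext_monomial: "m \<in> Mon n r k \<Longrightarrow> supp (dext n (monomial m)) \<subseteq> Mon n (r - 1) (k + 1)"
  using supp_dext[of "monomial m" n r k] by simp

lemma J_gens_subset_kappa_range: "J_gens n r k \<subseteq> kappa_range n"
  using Mon_subset_Mons kappa_monomial_in_kappa_range
  by (fastforce simp: J_gens_def elim: J_indexE)

lemma supp_J_gens:
  assumes "g \<in> J_gens n r k"
  shows "supp g \<subseteq> {m. r + 1 \<le> int (poly_deg n m)}"
proof -
  obtain m l where "g = kappa (monomial m)" "1 \<le> l" "m \<in> Mon n (r + int l - 1) (k + 1)"
    using assms by (auto simp: J_gens_def elim: J_indexE)
  then show ?thesis using supp_kappa_monomial by (fastforce simp: Mon_eq)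
qed

lemma supp_dext_J_gens:
  assumes "g \<in> dext n ` J_gens n r k"
  shows "supp g \<subseteq> {m. r \<le> int (poly_deg n m)}"
proof -
  obtain m l where g: "g = dext n (kappa (monomial m))" "1 \<le> l" "m \<in> Mon n (r + int l - 1) (k + 1)"
    using assms by (auto simp: J_gens_def elim: J_indexE)
  then have "supp (kappa (monomial m)) \<subseteq> Mon n (r + int l) k"
    using supp_kappa_monomial by fastforce
  then have "supp g \<subseteq> Mon n (r + int l - 1) (k + 1)"
    using supp_dext[OF kappa_in_fin_forms] g(1) by fastforce
  then show ?thesis using g(2) by (auto simp: Mon_eq)
qed

lemma kappa_dext_kappa_monomial:
  assumes "m \<in> Mon n r k"
  shows "kappa (dext n (kappa (monomial m))) = fscale (of_int (r + k)) (kappa (monomial m))"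
proof -
  have m: "monomial m \<in> forms n" using assms Mon_subset_Mons monomial_in_forms by blast
  have "dext n (kappa (kappa (monomial m))) + kappa (dext n (kappa (monomial m)))
      = fscale (of_int (r + 1 + (k - 1))) (kappa (monomial m))"
    using assms by (intro homotopy_homogeneous kappa_in_fin_forms supp_kappa_monomial)
  then show ?thesis using kappa_kappa[OF m] by (simp add: dext_def)
qed

lemma J_gens_subset_span_kappa_dext:
  assumes "0 \<le> r" "0 \<le> k"
  shows "J_gens n r k \<subseteq> fspan (kappa ` dext n ` J_gens n r k)"
proof
  fix g assume g: "g \<in> J_gens n r k"
  then obtain m l where gm: "g = kappa (monomial m)" "1 \<le> l" "m \<in> Mon n (r + int l - 1) (k + 1)"
    by (auto simp: J_gens_def elim: J_indexE)
  let ?c = "of_int (r + int l - 1 + (k + 1)) :: real"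
  have "fscale ?c g \<in> fspan (kappa ` dext n ` J_gens n r k)"
    using g kappa_dext_kappa_monomial[OF gm(3)] gm(1) by (intro fvs.span_base) (metis image_eqI)
  then have "fscale (1 / ?c) (fscale ?c g) \<in> fspan (kappa ` dext n ` J_gens n r k)"
    by (rule fvs.span_scale)
  then show "g \<in> fspan (kappa ` dext n ` J_gens n r k)"
    using assms gm(2) by (simp add: fvs.scale_scale)
qed

lemma kappa_dext_J_gens_subset_span: "kappa ` dext n ` J_gens n r k \<subseteq> fspan (J_gens n r k)"
proof
  fix g assume "g \<in> kappa ` dext n ` J_gens n r k"
  then obtain m where gm: "g = kappa (dext n (kappa (monomial m)))" "m \<in> J_index n r k"
    by (auto simp: J_gens_def)
  then obtain l where l: "m \<in> Mon n (r + int l - 1) (k + 1)" by (auto elim: J_indexE)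
  have "kappa (monomial m) \<in> fspan (J_gens n r k)"
    using gm(2) by (auto simp: J_gens_def intro: fvs.span_base)
  then show "g \<in> fspan (J_gens n r k)"
    using kappa_dext_kappa_monomial[OF l] gm(1) by (simp add: fvs.span_scale)
qed

(* A generator of J_(r-1) with l = 1 lies in kappa H_(r-1); with l > 1 it generates J_r with l - 1. *)
lemma J_gens_pred_subset:
  "J_gens n (r - 1) k \<subseteq> kappa ` monomial ` Mon n (r - 1) (k + 1) \<union> J_gens n r k"
proof
  fix g assume "g \<in> J_gens n (r - 1) k"
  then obtain m l where g: "g = kappa (monomial m)" "1 \<le> l" "m \<in> Mon n (r - 1 + int l - 1) (k + 1)" "l \<le> ldeg n m"
    by (auto simp: J_gens_def elim: J_indexE)
  show "g \<in> kappa ` monomial ` Mon n (r - 1) (k + 1) \<union> J_gens n r k"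
  proof (cases "l = 1")
    case True
    then show ?thesis using g by auto
  next
    case False
    then have "m \<in> J_index n r k"
      using g by (auto simp: J_index_def of_nat_diff intro!: bexI[of _ "l - 1"])
    then show ?thesis using g(1) by (auto simp: J_gens_def)
  qed
qed

lemma kappa_P_gens_pred_subset:
  "kappa ` P_gens n (r - 1) (k + 1) \<subseteq> fspan (P_gens n (r - 1) k) \<union> kappa ` monomial ` Mon n (r - 1) (k + 1)"
proof
  fix g assume "g \<in> kappa ` P_gens n (r - 1) (k + 1)"
  then obtain m j where g: "j \<in> {0..r - 1}" "m \<in> Mon n j (k + 1)" "g = kappa (monomial m)"
    by (auto simp: P_gens_def)
  show "g \<in> fspan (P_gens n (r - 1) k) \<union> kappa ` monomial ` Mon n (r - 1) (k + 1)"
  proof (cases "j = r - 1")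
    case False
    then have "supp g \<subseteq> (\<Union>j\<in>{0..r - 1}. Mon n j k)"
      using g supp_kappa_monomial[OF g(2)] by (intro subset_trans[OF _ UN_upper[of "j + 1"]]) auto
    then show ?thesis by (simp add: span_P_gens)
  qed (use g in auto)
qed

lemma kappa_J_gens: "kappa ` J_gens n r k \<subseteq> {0}"
  using J_gens_subset_kappa_range kappa_kappa by (fastforce simp: kappa_range_def)

lemma Sminus_eq_gens:
  assumes "1 \<le> r" "0 \<le> k"
  shows "Sminus n r k = fspan (P_gens n (r - 1) k \<union> kappa ` monomial ` Mon n (r - 1) (k + 1)
      \<union> J_gens n r k \<union> dext n ` J_gens n r (k - 1))" (is "_ = fspan ?T")
proof -
  let ?U = "P_gens n (r - 1) k \<union> J_gens n (r - 1) k \<union> dext n ` J_gens n r (k - 1)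
   \<union> kappa ` P_gens n (r - 1) (k + 1) \<union> kappa ` J_gens n (r - 1) (k + 1) \<union> kappa ` dext n ` J_gens n r k"
  have T: "?T \<subseteq> fspan ?T" by (rule fvs.span_superset)
  have P: "fspan (P_gens n (r - 1) k) \<subseteq> fspan ?T" and J: "fspan (J_gens n r k) \<subseteq> fspan ?T"
    by (intro fvs.span_mono; blast)+
  have "J_gens n (r - 1) k \<subseteq> fspan ?T"
    using J_gens_pred_subset[of n r k] T by blast
  moreover have "kappa ` P_gens n (r - 1) (k + 1) \<subseteq> fspan ?T"
    using kappa_P_gens_pred_subset[of n r k] P T by blast
  moreover have "kappa ` J_gens n (r - 1) (k + 1) \<subseteq> fspan ?T"
    by (rule subset_trans[OF kappa_J_gens]) (simp add: fvs.span_zero)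
  moreover have "kappa ` dext n ` J_gens n r k \<subseteq> fspan ?T"
    using kappa_dext_J_gens_subset_span J by (rule subset_trans)
  moreover have "P_gens n (r - 1) k \<union> dext n ` J_gens n r (k - 1) \<subseteq> fspan ?T"
    using T by blast
  ultimately have "?U \<subseteq> fspan ?T" by (simp only: Un_subset_iff)
  moreover have "?T \<subseteq> fspan ?U"
  proof -
    have U: "?U \<subseteq> fspan ?U" by (rule fvs.span_superset)
    have "kappa ` monomial ` Mon n (r - 1) (k + 1) \<subseteq> kappa ` P_gens n (r - 1) (k + 1)"
      using assms(1) unfolding P_gens_def by (intro image_mono UN_upper) auto
    then have "kappa ` monomial ` Mon n (r - 1) (k + 1) \<subseteq> fspan ?U" using U by blast
    moreover have "fspan (kappa ` dext n ` J_gens n r k) \<subseteq> fspan ?U"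
      by (rule fvs.span_mono) blast
    then have "J_gens n r k \<subseteq> fspan ?U"
      using J_gens_subset_span_kappa_dext[of r k n] assms by auto
    moreover have "P_gens n (r - 1) k \<union> dext n ` J_gens n r (k - 1) \<subseteq> fspan ?U"
      using U by blast
    ultimately show ?thesis by (simp only: Un_subset_iff)
  qed
  ultimately show ?thesis
    unfolding Sminus_eq fvs.span_eq by blast
qed

section \<open>Dimension counts\<close>

definition koszul_dim :: "nat \<Rightarrow> int \<Rightarrow> int \<Rightarrow> nat" where
  "koszul_dim n r k = fdim (kappa ` monomial ` Mon n (r - 1) (k + 1))"

lemma dim_Pminus_gens:
  "fdim (Pminus n r k) = fdim (P_gens n (r - 1) k) + fdim (kappa ` monomial ` Mon n (r - 1) (k + 1))"
  unfolding Pminus_eq fvs.dim_span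
proof (rule dim_Un_disjoint_supp)
  show "P_gens n (r - 1) k \<subseteq> {f. supp f \<subseteq> {m. int (poly_deg n m) < r}}"
    by (auto simp: P_gens_def Mon_eq)
  show "kappa ` monomial ` Mon n (r - 1) (k + 1) \<subseteq> {f. supp f \<subseteq> {m. int (poly_deg n m) = r}}"
    using supp_kappa_monomial by (fastforce simp: Mon_eq)
qed (auto simp: P_gens_def finite_Mon)

lemma dim_Pminus: "fdim (Pminus n r k) = card (\<Union>j\<in>{0..r - 1}. Mon n j k) + koszul_dim n r k"
  unfolding dim_Pminus_gens koszul_dim_def by (simp add: P_gens_def dim_monomials finite_Mon)

(* Polynomial degrees < r, = r and > r separate all families but the d-images, which are split
   off from the range of kappa by the homotopy formula. *)
lemma dim_Sminus:
  assumes "1 \<le> r" "0 \<le> k"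
  shows "fdim (Sminus n r k) = fdim (Pminus n r k) + fdim (J n r k) + fdim (J n r (k - 1))"
proof -
  let ?G0 = "P_gens n (r - 1) k" and ?GB = "kappa ` monomial ` Mon n (r - 1) (k + 1)"
    and ?G1 = "J_gens n r k" and ?G2 = "dext n ` J_gens n r (k - 1)"
  let ?deg_ge = "\<lambda>d. {f. supp f \<subseteq> {m. d \<le> int (poly_deg n m)}}"
  have fin: "finite ?G0" "finite ?GB" "finite ?G1" "finite ?G2"
    by (simp_all add: P_gens_def J_gens_def finite_Mon finite_J_index)
  have supp0: "?G0 \<subseteq> {f. supp f \<subseteq> {m. int (poly_deg n m) < r}}"
    by (auto simp: P_gens_def Mon_eq)
  have suppB: "?GB \<subseteq> {f. supp f \<subseteq> {m. int (poly_deg n m) = r}}"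
    using supp_kappa_monomial by (fastforce simp: Mon_eq)
  have supp1: "?G1 \<subseteq> ?deg_ge (r + 1)"
    using supp_J_gens by blast
  have supp2: "?G2 \<subseteq> ?deg_ge r"
    using supp_dext_J_gens by blast
  have "{m. int (poly_deg n m) = r} \<subseteq> {m. r \<le> int (poly_deg n m)}"
    "{m. r + 1 \<le> int (poly_deg n m)} \<subseteq> {m. r \<le> int (poly_deg n m)}" by auto
  then have suppB12: "?GB \<union> ?G1 \<union> ?G2 \<subseteq> ?deg_ge r"
    using suppB supp1 supp2 by blast
  have kappa_B1: "?GB \<union> ?G1 \<subseteq> kappa_range n"
    using J_gens_subset_kappa_range Mon_subset_Mons kappa_monomial_in_kappa_range by blast
  have "J_gens n r (k - 1) \<subseteq> forms n"
    using J_gens_subset_kappa_range kappa_in_forms by (fastforce simp: kappa_range_def)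
  then have exact_2: "?G2 \<subseteq> exact_forms n" by (auto simp: exact_forms_def)
  have "fdim (Sminus n r k) = fdim (?G0 \<union> (?GB \<union> ?G1 \<union> ?G2))"
    unfolding Sminus_eq_gens[OF assms] fvs.dim_span by (simp add: Un_assoc)
  also have "\<dots> = fdim ?G0 + fdim (?GB \<union> ?G1 \<union> ?G2)"
    by (rule dim_Un_disjoint_supp[OF fin(1) _ supp0 suppB12]) (use fin in auto)
  also have "fdim (?GB \<union> ?G1 \<union> ?G2) = fdim (?GB \<union> ?G1) + fdim ?G2"
    by (rule dim_Un_kappa_range_exact[OF _ fin(4) kappa_B1 exact_2]) (use fin in auto)
  also have "fdim (?GB \<union> ?G1) = fdim ?GB + fdim ?G1"
    by (rule dim_Un_disjoint_supp[OF fin(2,3) suppB supp1]) auto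
  also have "fdim ?G2 = fdim (J n r (k - 1))"
    unfolding J_eq fvs.dim_span using J_gens_subset_kappa_range by (rule dim_dext_image)
  finally show ?thesis by (simp add: J_eq dim_Pminus_gens)
qed

lemma kappa_image_span_monomials: "kappa ` fspan (monomial ` M) = fspan (kappa ` monomial ` M)"
  unfolding kappa_def by (rule lin_ext_image_span) simp

lemma dext_image_span_monomials: "dext n ` fspan (monomial ` M) = fspan (dext n ` monomial ` M)"
  unfolding dext_def by (rule lin_ext_image_span) simp

lemma kappa_monomial_in_span: "m \<in> Mon n r k \<Longrightarrow> kappa (monomial m) \<in> fspan (monomial ` Mon n (r + 1) (k - 1))"
  using supp_kappa_monomial by (simp add: span_monomials finite_Mon)

lemma dext_monomial_in_span: "m \<in> Mon n r k \<Longrightarrow> dext n (monomial m) \<in> fspan (monomial ` Mon n (r - 1) (k + 1))"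
  using supp_dext_monomial by (simp add: span_monomials finite_Mon)

context
  fixes n :: nat and r k :: int
  assumes deg: "r + k \<noteq> 0"
begin

lemma span_kappa_Un_dext_monomials:
  "fspan (kappa ` monomial ` Mon n (r - 1) (k + 1) \<union> dext n ` monomial ` Mon n (r + 1) (k - 1))
    = fspan (monomial ` Mon n r k)"
  (is "fspan (?K \<union> ?D) = _")
proof -
  have "?K \<union> ?D \<subseteq> fspan (monomial ` Mon n r k)"
    using kappa_monomial_in_span[of _ n "r - 1" "k + 1"] dext_monomial_in_span[of _ n "r + 1" "k - 1"] by auto
  moreover have "monomial m \<in> fspan (?K \<union> ?D)" if m: "m \<in> Mon n r k" for m
  proof -
    have "dext n (kappa (monomial m)) \<in> fspan ?D" "kappa (dext n (monomial m)) \<in> fspan ?K"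
      using kappa_monomial_in_span[OF m] dext_monomial_in_span[OF m]
      by (auto simp flip: kappa_image_span_monomials dext_image_span_monomials)
    then have "dext n (kappa (monomial m)) + kappa (dext n (monomial m)) \<in> fspan (?K \<union> ?D)"
      using fvs.span_mono[of ?K "?K \<union> ?D"] fvs.span_mono[of ?D "?K \<union> ?D"]
      by (intro fvs.span_add) auto
    moreover have "dext n (kappa (monomial m)) + kappa (dext n (monomial m)) = fscale (of_int (r + k)) (monomial m)"
      using m by (intro homotopy_homogeneous) auto
    ultimately have "fscale (of_int (r + k)) (monomial m) \<in> fspan (?K \<union> ?D)" by simp
    then show ?thesis using deg by (auto elim: fvs.span_scale_cancel)
  qed
  ultimately show ?thesis unfolding fvs.span_eq by auto
qed

lemma dim_kappa_dext_monomials: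
  "fdim (kappa ` dext n ` monomial ` Mon n (r + 1) (k - 1)) = fdim (kappa ` monomial ` Mon n r k)"
  (is "fdim (kappa ` ?D) = fdim ?K'")
proof -
  have "kappa ` ?D \<subseteq> fspan ?K'"
    using dext_monomial_in_span[of _ n "r + 1" "k - 1"] by (auto simp flip: kappa_image_span_monomials)
  moreover have "kappa (monomial m) \<in> fspan (kappa ` ?D)" if m: "m \<in> Mon n r k" for m
  proof -
    have "dext n (kappa (monomial m)) \<in> fspan ?D"
      using kappa_monomial_in_span[OF m] by (auto simp flip: dext_image_span_monomials)
    moreover have "kappa ` fspan ?D = fspan (kappa ` ?D)"
      unfolding kappa_def by (rule lin_ext_image_span) simp
    ultimately have "kappa (dext n (kappa (monomial m))) \<in> fspan (kappa ` ?D)" by blast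
    then show ?thesis
      using kappa_dext_kappa_monomial[OF m] deg by (auto elim: fvs.span_scale_cancel)
  qed
  ultimately have "fspan (kappa ` ?D) = fspan ?K'" unfolding fvs.span_eq by auto
  then show ?thesis by (metis fvs.dim_span)
qed

lemma card_Mon_eq_koszul_dim_add: "card (Mon n r k) = koszul_dim n r k + koszul_dim n (r + 1) (k - 1)"
proof -
  let ?K = "kappa ` monomial ` Mon n (r - 1) (k + 1)" and ?D = "dext n ` monomial ` Mon n (r + 1) (k - 1)"
  have exact: "?D \<subseteq> exact_forms n"
    using Mon_subset_Mons[of n "r + 1" "k - 1"] by (auto intro: dext_monomial_in_exact_forms)
  have "card (Mon n r k) = fdim (?K \<union> ?D)"
    using span_kappa_Un_dext_monomials by (metis dim_monomials finite_Mon fvs.dim_span)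
  also have "\<dots> = fdim ?K + fdim ?D"
    using Mon_subset_Mons[of n "r - 1" "k + 1"] exact
    by (intro dim_Un_kappa_range_exact) (auto simp: finite_Mon intro: kappa_monomial_in_kappa_range)
  also have "fdim ?D = fdim (kappa ` ?D)"
    using dim_kappa_image[OF exact] by simp
  finally show ?thesis
    using dim_kappa_dext_monomials by (simp add: koszul_dim_def)
qed

end

(* Pascal's rule and trinomial revision. *)
lemma binomial_koszul_step:
  fixes t j n :: nat
  shows "((t + n) choose (t + j + 2)) * ((t + j + 1) choose (j + 1)) + (Suc (t + n) choose (t + j + 2)) * ((t + j + 1) choose j)
       = ((t + n) choose (t + 1)) * (n choose (j + 1))"
proof (cases "n \<le> j + 1")
  case True
  then consider "n < j + 1" | "n = j + 1" by linarith
  then show ?thesis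
    using binomial_symmetric[of j "t + j + 1"] by cases (simp_all add: binomial_eq_0 ac_simps)
next
  case False
  define b where "b = n - j - 2"
  have n: "n = j + b + 2" using False by (simp add: b_def)
  have pascal1: "Suc (t + n) choose (t + j + 2) = ((t + n) choose (t + j + 1)) + ((t + n) choose (t + j + 2))"
    using binomial_Suc_Suc[of "t + n" "t + j + 1"] by (simp add: ac_simps)
  have pascal2: "((t + j + 1) choose j) + ((t + j + 1) choose (j + 1)) = (t + j + 2) choose (j + 1)"
    using binomial_Suc_Suc[of "t + j + 1" j] by (simp add: ac_simps)
  have pascal3: "((j + b + 1) choose (j + 1)) + ((j + b + 1) choose j) = n choose (j + 1)"
    using binomial_Suc_Suc[of "j + b + 1" j] by (simp add: n ac_simps)
  have tri1: "((t + n) choose (t + j + 2)) * ((t + j + 2) choose (j + 1)) = ((t + n) choose (t + 1)) * ((j + b + 1) choose (j + 1))"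
    using choose_mult_lemma[of "j + 1" b "t + 1"] binomial_symmetric[of "j + 1" "t + j + 2"]
    by (simp add: n ac_simps del: binomial_Suc_Suc)
  have tri2: "((t + n) choose (t + j + 1)) * ((t + j + 1) choose j) = ((t + n) choose (t + 1)) * ((j + b + 1) choose j)"
    using choose_mult_lemma[of j "b + 1" "t + 1"] binomial_symmetric[of j "t + j + 1"]
    by (simp add: n ac_simps del: binomial_Suc_Suc)
  have "((t + n) choose (t + j + 2)) * ((t + j + 1) choose (j + 1)) + (Suc (t + n) choose (t + j + 2)) * ((t + j + 1) choose j)
      = ((t + n) choose (t + j + 2)) * (((t + j + 1) choose j) + ((t + j + 1) choose (j + 1)))
        + ((t + n) choose (t + j + 1)) * ((t + j + 1) choose j)"
    unfolding pascal1 by (simp only: add_mult_distrib add_mult_distrib2 ac_simps)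
  also have "\<dots> = ((t + n) choose (t + 1)) * (((j + b + 1) choose (j + 1)) + ((j + b + 1) choose j))"
    unfolding pascal2 add_mult_distrib2 tri1 tri2 ..
  finally show ?thesis unfolding pascal3 .
qed

lemma binomial_add_swap: "(a + b) choose a = (a + b) choose (b :: nat)"
  using binomial_symmetric[of a "a + b"] by simp

lemma binomial_trimmed_step:
  fixes t n k :: nat
  assumes "k \<le> n"
  shows "((n + t) choose t) * (n choose k) + ((t + n) choose (t + k + 1)) * ((t + k) choose k)
       = (Suc (t + n) choose Suc (t + k)) * ((t + k) choose k)"
proof -
  obtain a where a: "n = k + a" using assms le_Suc_ex by blast
  have "((t + a + k) choose (t + k)) * ((t + k) choose k) = ((t + a + k) choose k) * ((t + a) choose t)"
    and "((a + t + k) choose (a + k)) * ((a + k) choose k) = ((a + t + k) choose k) * ((a + t) choose a)"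
    by (rule choose_mult_lemma)+
  moreover have "(a + t + k) choose (a + k) = (a + t + k) choose t" "(a + t) choose a = (t + a) choose t"
    using binomial_add_swap[of "a + k" t] binomial_add_swap[of a t] by (simp_all add: ac_simps)
  ultimately have "((n + t) choose t) * (n choose k) = ((t + n) choose (t + k)) * ((t + k) choose k)"
    using a by (simp add: ac_simps)
  then show ?thesis by (simp add: algebra_simps)
qed

lemma koszul_dim_neg: "koszul_dim n r (-1) = 0"
proof -
  have "kappa ` monomial ` Mon n (r - 1) 0 \<subseteq> {0}"
  proof
    fix g assume "g \<in> kappa ` monomial ` Mon n (r - 1) 0"
    then obtain a s where m: "(a, s) \<in> Mon n (r - 1) 0" "g = kappa (monomial (a, s))" by auto
    then have "s = {}" using finite_snd_Mons[OF subsetD[OF Mon_subset_Mons m(1)]] by (auto simp: Mon_def)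
    then show "g \<in> {0}" using m(2) by (simp add: kappa_def kappa_mono_def zero_fun_def)
  qed
  then have "fspan (kappa ` monomial ` Mon n (r - 1) 0) = fspan {}"
    using fvs.span_mono[of _ "{0}"] fvs.span_mono[of "{}"] by (simp add: subset_antisym)
  then have "fdim (kappa ` monomial ` Mon n (r - 1) 0) = fdim {}" by (rule fvs.span_eq_dim)
  then show ?thesis
    using fvs.dim_eq_card_independent[OF fvs.independent_empty] by (simp add: koszul_dim_def)
qed

lemma koszul_dim_closed: "koszul_dim n (int t + 1) (int j) = ((t + n) choose (t + j + 1)) * ((t + j) choose j)"
proof (induction j arbitrary: t)
  case 0
  have "card (Mon n (int t + 1) 0) = koszul_dim n (int t + 1) 0"
    using card_Mon_eq_koszul_dim_add[of "int t + 1" 0 n] koszul_dim_neg by simp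
  moreover have "card (Mon n (int t + 1) 0) = (t + n) choose (t + 1)"
    using card_Mon[of n "t + 1" 0] by (simp add: ac_simps)
  ultimately show ?case by simp
next
  case (Suc j)
  have "card (Mon n (int t + 1) (int (Suc j))) = koszul_dim n (int t + 1) (int (Suc j)) + koszul_dim n (int (t + 1) + 1) (int j)"
    using card_Mon_eq_koszul_dim_add[of "int t + 1" "int (Suc j)" n] by (simp add: ac_simps)
  moreover have "card (Mon n (int t + 1) (int (Suc j))) = ((t + n) choose (t + 1)) * (n choose (j + 1))"
    using card_Mon[of n "t + 1" "Suc j"] by (simp add: ac_simps)
  moreover have "koszul_dim n (int (t + 1) + 1) (int j) = (Suc (t + n) choose (t + j + 2)) * ((t + j + 1) choose j)"
    using Suc.IH[of "t + 1"] by (simp add: ac_simps)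
  ultimately show ?case
    using binomial_koszul_step[where t = t and j = j and n = n] by (simp add: ac_simps)
qed

lemma card_Mon_below:
  "card (\<Union>j\<in>{0..int r - 1}. Mon n j k) = (\<Sum>j<r. card (Mon n (int j) k))"
proof -
  have "{0..int r - 1} = int ` {..<r}"
    by (auto simp: image_iff intro!: bexI[of _ "nat _"])
  then have "(\<Union>j\<in>{0..int r - 1}. Mon n j k) = (\<Union>j<r. Mon n (int j) k)" by simp
  moreover have "card (\<Union>j<r. Mon n (int j) k) = (\<Sum>j<r. card (Mon n (int j) k))"
    by (intro card_UN_disjoint ballI finite_Mon) (auto simp: Mon_eq)
  ultimately show ?thesis by simp
qed

lemma dim_Pminus_closed:
  assumes "1 \<le> n" "k \<le> n"
  shows "fdim (Pminus n (int t + 1) (int k)) = (Suc (t + n) choose Suc (t + k)) * ((t + k) choose k)"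
proof -
  obtain p where p: "n = Suc p" using assms(1) by (cases n) auto
  have "(\<Sum>j<Suc t. card (Mon n (int j) (int k))) = (\<Sum>j\<le>t. (p + j) choose j) * (n choose k)"
    by (simp add: card_Mon sum_distrib_right lessThan_Suc_atMost p)
  also have "\<dots> = ((n + t) choose t) * (n choose k)"
    by (simp add: sum_choose_lower p)
  finally have "card (\<Union>j\<in>{0..int t}. Mon n j (int k)) = ((n + t) choose t) * (n choose k)"
    using card_Mon_below[where r = "Suc t" and n = n and k = "int k"] by simp
  then show ?thesis
    using dim_Pminus[of n "int t + 1" "int k"] koszul_dim_closed[of n t k] binomial_trimmed_step[OF assms(2), of t]
    by simp
qed

theorem mainTheorem7:
  fixes n r k :: nat
  assumes "n \<ge> 1" and "r \<ge> 1" and "k \<le> n"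
  shows "fdim (Sminus n (int r) (int k)) =
           fdim (Pminus n (int r) (int k)) + fdim (J n (int r) (int k)) + fdim (J n (int r) (int k - 1))
         \<and> fdim (Pminus n (int r) (int k)) = ((r + n) choose (r + k)) * ((r + k - 1) choose k)"
proof
  show "fdim (Sminus n (int r) (int k)) =
      fdim (Pminus n (int r) (int k)) + fdim (J n (int r) (int k)) + fdim (J n (int r) (int k - 1))"
    using assms(2) by (intro dim_Sminus) simp_all
  obtain t where r: "r = Suc t" using assms(2) by (cases r) auto
  have "int r = int t + 1" using r by simp
  then have "fdim (Pminus n (int r) (int k)) = (Suc (t + n) choose Suc (t + k)) * ((t + k) choose k)"
    using dim_Pminus_closed[OF assms(1,3)] by simp
  also have "\<dots> = ((r + n) choose (r + k)) * ((r + k - 1) choose k)"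
    by (simp add: r)
  finally show "fdim (Pminus n (int r) (int k)) = ((r + n) choose (r + k)) * ((r + k - 1) choose k)" .
qed

end
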